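(* Let $s,t,z$ be positive integers. For $\lambda\in\{0,\dots,z\}$ let $\theta=ts+\lambda$, $q=\min\{\lfloor\frac{z-1}{\lambda}\rfloor,t-1\}$, let $\mathbf P(C_A),\mathbf P(C_B),\mathbf P(S_A),\mathbf P(S_B)$ be the exponent sets described in the context, and let $N(\lambda)=\big|(\mathbf P(C_A)\cup\mathbf P(S_A))+(\mathbf P(C_B)\cup\mathbf P(S_B))\big|$ be the number of workers needed by AGE-CMPC with parameter $\lambda$. The number of workers required by AGE-CMPC is $N_{\text{AGE-CMPC}}=\min_{\lambda\in\{0,\dots,z\}}N(\lambda)$. Then $N_{\text{AGE-CMPC}}=2s+2z-1$ if $t=1$, and $N_{\text{AGE-CMPC}}=\min_{\lambda\in\{0,\dots,z\}}\Gamma(\lambda)$ if $t\ge2$, where $\Gamma(\lambda)=\Upsilon_1=2st^2+2z-1$ if $z>ts-s$, $\lambda=0$; $\Upsilon_2=st^2+3st-2s+t(z-1)+1$ if $z\le ts-s$, $\lambda=0$; $\Upsilon_3=2ts+(ts+z)(t-1)+2z-1$ if $\lambda=z$; $\Upsilon_4=(q+2)ts+\theta(t-1)+2z-1$ if $z>ts$, $0<\lambda<z$; $\Upsilon_5=3ts+\theta(t-1)+2z-1$ if $z\le ts$, $0<\lambda<z$, $ts<\lambda+s-1$; $\Upsilon_6=2ts+\theta(t-1)+(q+2)z-q-1$ if $\lambda+s-1<z\le ts$, $0<\lambda<z$, $q\lambda\ge s$; $\Upsilon_7=\theta(t+1)+q(z-1)-2\lambda+z+ts+\min\{0,z+s(1-t)-\lambda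 q-1\}$ if $\lambda+s-1<z\le ts$, $0<\lambda<z$, $q\lambda<s$; $\Upsilon_8=2ts+\theta(t-1)+3z+(\lambda+s-1)q-\lambda-s-1$ if $z\le\lambda+s-1\le ts$, $0<\lambda<z$, $q\lambda\ge s$; $\Upsilon_9=\theta(t+1)+q(s-1)-3\lambda+3z-1+\min\{0,ts-z+1+\lambda q-s\}$ if $z\le\lambda+s-1\le ts$, $0<\lambda<z$, $q\lambda<s$.
   Context: AGE-CMPC with parameter $\lambda$ uses $F_A=C_A+S_A$, $F_B=C_B+S_B$ with exponent sets: $\mathbf P(C_A)=\{j+si:0\le i\le t-1,0\le j\le s-1\}$, $\mathbf P(C_B)=\{(s-1-k)+\theta l:0\le k\le s-1,0\le l\le t-1\}$; $\mathbf P(S_A)=\{ts+\theta l+w:0\le l\le q-1,0\le w\le\lambda-1\}\cup\{ts+\theta q+u:0\le u\le z-1-q\lambda\}$ if $z>\lambda$ and $t\ne1$, and $\mathbf P(S_A)=\{ts+u:0\le u\le z-1\}$ if $z\le\lambda$ or $t=1$; $\mathbf P(S_B)=\{ts+\theta(t-1)+r:0\le r\le z-1\}$. Here $\mathbf X+\mathbf Y=\{a+b:a\in\mathbf X,b\in\mathbf Y\}$, and the required number of workers equals the number of monomials of $F_A(x)F_B(x)$. Convention: for $\lambda=0$ the quotient $\frac{z-1}{\lambda}$ is treated as $+\infty$, so $q=t-1$. *)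

theory Defs
  imports Main
begin

definition sumset :: "nat set \<Rightarrow> nat set \<Rightarrow> nat set" where
  "sumset X Y = {a + b | a b. a \<in> X \<and> b \<in> Y}"

definition age_theta :: "nat \<Rightarrow> nat \<Rightarrow> nat \<Rightarrow> nat" where
  "age_theta s t lam = t * s + lam"

text \<open>q = min (floor((z-1)/lambda), t-1); for lambda = 0 the quotient is +infinity, so q = t-1.\<close>
definition age_q :: "nat \<Rightarrow> nat \<Rightarrow> nat \<Rightarrow> nat" where
  "age_q t z lam = (if lam = 0 then t - 1 else min ((z - 1) div lam) (t - 1))"

definition P_CA :: "nat \<Rightarrow> nat \<Rightarrow> nat set" where
  "P_CA s t = {j + s * i | i j. i \<le> t - 1 \<and> j \<le> s - 1}"

definition P_CB :: "nat \<Rightarrow> nat \<Rightarrow> nat \<Rightarrow> nat set" where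
  "P_CB s t lam = {(s - 1 - k) + age_theta s t lam * l | k l. k \<le> s - 1 \<and> l \<le> t - 1}"

definition P_SA :: "nat \<Rightarrow> nat \<Rightarrow> nat \<Rightarrow> nat \<Rightarrow> nat set" where
  "P_SA s t z lam =
     (if z > lam \<and> t \<noteq> 1 then
        {t * s + age_theta s t lam * l + w | l w. l < age_q t z lam \<and> w < lam}
        \<union> {t * s + age_theta s t lam * age_q t z lam + u | u. u \<le> z - 1 - age_q t z lam * lam}
      else {t * s + u | u. u \<le> z - 1})"

definition P_SB :: "nat \<Rightarrow> nat \<Rightarrow> nat \<Rightarrow> nat \<Rightarrow> nat set" where
  "P_SB s t z lam = {t * s + age_theta s t lam * (t - 1) + r | r. r \<le> z - 1}"

definition N_age :: "nat \<Rightarrow> nat \<Rightarrow> nat \<Rightarrow> nat \<Rightarrow> nat" where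
  "N_age s t z lam = card (sumset (P_CA s t \<union> P_SA s t z lam) (P_CB s t lam \<union> P_SB s t z lam))"

definition N_AGE_CMPC :: "nat \<Rightarrow> nat \<Rightarrow> nat \<Rightarrow> nat" where
  "N_AGE_CMPC s t z = Min ((\<lambda>lam. N_age s t z lam) ` {0..z})"

text \<open>Gamma(lambda), computed over the integers (uses min{0,...}).\<close>
definition Gamma :: "nat \<Rightarrow> nat \<Rightarrow> nat \<Rightarrow> nat \<Rightarrow> int" where
  "Gamma s' t' z' lam' =
    (let s = int s'; t = int t'; z = int z'; lam = int lam';
         th = t * s + lam; q = int (age_q t' z' lam') in
     if lam = 0 then
       (if z > t * s - s then 2 * s * t^2 + 2 * z - 1
        else s * t^2 + 3 * s * t - 2 * s + t * (z - 1) + 1)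
     else if lam = z then 2 * t * s + (t * s + z) * (t - 1) + 2 * z - 1
     else if z > t * s then (q + 2) * t * s + th * (t - 1) + 2 * z - 1
     else if t * s < lam + s - 1 then 3 * t * s + th * (t - 1) + 2 * z - 1
     else if lam + s - 1 < z then
       (if q * lam \<ge> s then 2 * t * s + th * (t - 1) + (q + 2) * z - q - 1
        else th * (t + 1) + q * (z - 1) - 2 * lam + z + t * s + min 0 (z + s * (1 - t) - lam * q - 1))
     else
       (if q * lam \<ge> s then 2 * t * s + th * (t - 1) + 3 * z + (lam + s - 1) * q - lam - s - 1
        else th * (t + 1) + q * (s - 1) - 3 * lam + 3 * z - 1 + min 0 (t * s - z + 1 + lam * q - s)))"

end

theory Submission
  imports Defs
begin

(* Every exponent set is a finite union of intervals, so the sumset counted by N(lambda) is the union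
   of the pairwise sums of these intervals.  For each lambda these sums merge into a chain of blocks
   [lo i, hi i] with increasing endpoints, and the cardinality of such a chain is its span minus the
   gaps between consecutive blocks; this gives N(lambda) in closed form.  The closed form does not
   agree with Gamma(lambda) in every case, but whenever the two differ both are at least
   N(z) = Gamma(z) = Upsilon_3, so the minima over lambda coincide. *)

lemma sumset_iff: "x \<in> sumset X Y \<longleftrightarrow> (\<exists>u\<in>X. \<exists>v\<in>Y. x = u + v)"
  unfolding sumset_def by blast

lemma sumset_Un_left: "sumset (X \<union> Y) Z = sumset X Z \<union> sumset Y Z"
  unfolding sumset_def by blast

lemma sumset_Un_right: "sumset X (Y \<union> Z) = sumset X Y \<union> sumset X Z"
  unfolding sumset_def by blast

lemma sumset_UN_left: "sumset (\<Union>i\<in>I. X i) Y = (\<Union>i\<in>I. sumset (X i) Y)"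
  unfolding sumset_def by blast

lemma sumset_UN_right: "sumset X (\<Union>i\<in>I. Y i) = (\<Union>i\<in>I. sumset X (Y i))"
  unfolding sumset_def by blast

lemma sumset_mono: "X \<subseteq> X' \<Longrightarrow> Y \<subseteq> Y' \<Longrightarrow> sumset X Y \<subseteq> sumset X' Y'"
  unfolding sumset_def by blast

lemma sumset_atLeastAtMost:
  assumes "a \<le> b" "c \<le> d"
  shows "sumset {a..b} {c..d} = {a + c..b + d}"
proof
  show "sumset {a..b} {c..d} \<subseteq> {a + c..b + d}"
    by (auto simp: sumset_iff)
  show "{a + c..b + d} \<subseteq> sumset {a..b} {c..d}"
  proof
    fix x assume x: "x \<in> {a + c..b + d}"
    define u where "u = max a (x - d)"
    have "u \<in> {a..b}" "x - u \<in> {c..d}" "x = u + (x - u)"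
      using assms x unfolding u_def by auto
    then show "x \<in> sumset {a..b} {c..d}" unfolding sumset_iff by blast
  qed
qed

lemma sumset_atLeastAtMost_add: "sumset {a..a + d} {c..c + e} = {a + c..a + c + (d + e)}"
  by (simp add: sumset_atLeastAtMost)

lemma mem_sumset_atLeastAtMost:
  fixes a c d e x :: nat
  assumes "{a..a + d} \<subseteq> X" "{c..c + e} \<subseteq> Y" "a + c \<le> x" "x \<le> a + c + (d + e)"
  shows "x \<in> sumset X Y"
  using sumset_mono[OF assms(1,2)] assms(3,4) unfolding sumset_atLeastAtMost_add by auto

lemma atLeastAtMost_Un_overlapping:
  fixes a b c d :: nat
  assumes "a \<le> c" "c \<le> Suc b" "b \<le> d"
  shows "{a..b} \<union> {c..d} = {a..d}"
  using assms by auto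

lemma UN_atLeastAtMost_progression:
  fixes \<theta> d :: nat
  assumes "\<theta> \<le> Suc d"
  shows "(\<Union>m\<le>n. {\<theta> * m..\<theta> * m + d}) = {0..\<theta> * n + d}"
proof (induction n)
  case (Suc n)
  have "(\<Union>m\<le>Suc n. {\<theta> * m..\<theta> * m + d}) = {0..\<theta> * n + d} \<union> {\<theta> * Suc n..\<theta> * Suc n + d}"
    using Suc.IH by (simp add: atMost_Suc Un_commute)
  also have "\<dots> = {0..\<theta> * Suc n + d}"
    using assms by (intro atLeastAtMost_Un_overlapping) auto
  finally show ?case .
qed simp

lemma card_UN_atLeastAtMost_chain:
  fixes L R :: "nat \<Rightarrow> nat"
  assumes "\<And>i. i < n \<Longrightarrow> L i \<le> L (Suc i) \<and> R i \<le> R (Suc i)" "\<And>i. i \<le> n \<Longrightarrow> L i \<le> R i"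
  shows "card (\<Union>i\<le>n. {L i..R i}) + (\<Sum>i<n. L (Suc i) - Suc (R i)) = Suc (R n) - L 0"
  using assms
proof (induction n)
  case (Suc n)
  let ?U = "\<Union>i\<le>n. {L i..R i}"
  let ?new = "{max (L (Suc n)) (Suc (R n))..R (Suc n)}"
  have "L 0 \<le> L i" if "i \<le> n" for i
    using that Suc.prems(1) by (induction i) (auto intro: le_trans)
  moreover have R_le: "R i \<le> R n" if "i \<le> n" for i
    using that Suc.prems(1) by (induction rule: dec_induct) (auto intro: le_trans)
  ultimately have U_sub: "?U \<subseteq> {L 0..R n}" by force
  have "{L (Suc n)..R n} \<subseteq> {L n..R n}" using Suc.prems(1)[of n] by auto
  then have "(\<Union>i\<le>Suc n. {L i..R i}) = ?U \<union> ?new"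
    unfolding atMost_Suc by auto
  moreover have "?U \<inter> ?new = {}" using U_sub by auto
  ultimately have "card (\<Union>i\<le>Suc n. {L i..R i}) = card ?U + card ?new"
    by (simp add: card_Un_disjoint)
  moreover have "card ?U + (\<Sum>i<n. L (Suc i) - Suc (R i)) = Suc (R n) - L 0"
    using Suc by auto
  moreover have "L 0 \<le> R n" using R_le[of 0] Suc.prems(2)[of 0] by simp
  moreover have "L (Suc n) \<le> R (Suc n)" "R n \<le> R (Suc n)" using Suc.prems by auto
  ultimately show ?case by (cases "L (Suc n) \<le> Suc (R n)") (simp_all add: max_def)
qed simp

lemma Collect_add_le_eq_UN:
  fixes f :: "'a \<Rightarrow> nat"
  shows "{f i + j | i j. P i \<and> j \<le> d} = (\<Union>i\<in>Collect P. {f i..f i + d})"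
proof (intro equalityI subsetI)
  fix x assume "x \<in> (\<Union>i\<in>Collect P. {f i..f i + d})"
  then obtain i where "P i" "f i \<le> x" "x \<le> f i + d" by auto
  then show "x \<in> {f i + j | i j. P i \<and> j \<le> d}"
    by (intro CollectI exI[of _ i] exI[of _ "x - f i"]) auto
qed auto

lemma Collect_add_le_eq_atLeastAtMost:
  fixes c :: nat
  shows "{c + j | j. j \<le> d} = {c..c + d}"
  using Collect_add_le_eq_UN[of "\<lambda>_. c" "\<lambda>_. True" d] by simp

lemma int_diff_eq_max: "int (m - n) = max 0 (int m - int n)"
  by (simp add: of_nat_diff_if)

definition agree_above :: "'a::linorder \<Rightarrow> 'a \<Rightarrow> 'a \<Rightarrow> bool" where
  "agree_above m x y \<longleftrightarrow> x = y \<or> (m \<le> x \<and> m \<le> y)"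

lemma Min_image_eq_if_agree_above:
  fixes f g :: "'a \<Rightarrow> 'b::linorder"
  assumes "finite D" "c \<in> D" "f c = g c" and agree: "\<And>x. x \<in> D \<Longrightarrow> agree_above (f c) (f x) (g x)"
  shows "Min (f ` D) = Min (g ` D)"
proof -
  have "Min (f ` D) \<le> Min (g ` D)" if "f c = g c" "\<And>x. x \<in> D \<Longrightarrow> agree_above (f c) (f x) (g x)"
    for f g :: "'a \<Rightarrow> 'b"
  proof -
    have "Min (g ` D) \<in> g ` D" using assms(1,2) by (intro Min_in) auto
    then obtain x where x: "x \<in> D" "Min (g ` D) = g x" by auto
    have "Min (f ` D) \<le> f x" "Min (f ` D) \<le> f c" using assms(1,2) x(1) by simp_all
    then show ?thesis using that(2)[OF x(1)] x(2) unfolding agree_above_def by auto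
  qed
  moreover have "agree_above (g c) (g x) (f x)" if "x \<in> D" for x
    using agree[OF that] assms(3) unfolding agree_above_def by auto
  ultimately show ?thesis using assms(3,4) by (metis antisym)
qed

lemma P_CA_eq:
  assumes "0 < s" "0 < t"
  shows "P_CA s t = {0..t * s - 1}"
proof -
  have "P_CA s t = {s * i + j | i j. i \<le> t - 1 \<and> j \<le> s - 1}"
    unfolding P_CA_def by (simp add: add.commute)
  also have "\<dots> = (\<Union>i\<le>t - 1. {s * i..s * i + (s - 1)})"
    unfolding Collect_add_le_eq_UN by (simp add: atMost_def)
  also have "\<dots> = {0..s * (t - 1) + (s - 1)}"
    by (rule UN_atLeastAtMost_progression) simp
  also have "s * (t - 1) + (s - 1) = t * s - 1"
    using assms by (cases t) (auto simp: algebra_simps)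
  finally show ?thesis .
qed

lemma P_CB_eq:
  "P_CB s t lam = (\<Union>m\<le>t - 1. {age_theta s t lam * m..age_theta s t lam * m + (s - 1)})"
proof -
  have "P_CB s t lam = {age_theta s t lam * m + c | m c. m \<le> t - 1 \<and> c \<le> s - 1}"
  proof (intro equalityI subsetI)
    fix x assume "x \<in> P_CB s t lam"
    then obtain k l where "k \<le> s - 1" "l \<le> t - 1" "x = (s - 1 - k) + age_theta s t lam * l"
      unfolding P_CB_def by blast
    then show "x \<in> {age_theta s t lam * m + c | m c. m \<le> t - 1 \<and> c \<le> s - 1}"
      by (intro CollectI exI[of _ l] exI[of _ "s - 1 - k"]) auto
  next
    fix x assume "x \<in> {age_theta s t lam * m + c | m c. m \<le> t - 1 \<and> c \<le> s - 1}"
    then obtain m c where "m \<le> t - 1" "c \<le> s - 1" "x = age_theta s t lam * m + c" by blast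
    then show "x \<in> P_CB s t lam"
      unfolding P_CB_def by (intro CollectI exI[of _ "s - 1 - c"] exI[of _ m]) auto
  qed
  then show ?thesis
    unfolding Collect_add_le_eq_UN by (simp add: atMost_def)
qed

lemma P_SB_eq:
  "P_SB s t z lam = {t * s + age_theta s t lam * (t - 1)..t * s + age_theta s t lam * (t - 1) + (z - 1)}"
  unfolding P_SB_def Collect_add_le_eq_atLeastAtMost ..

lemma P_SA_eq_atLeastAtMost:
  assumes "\<not> (lam < z \<and> t \<noteq> 1)"
  shows "P_SA s t z lam = {t * s..t * s + (z - 1)}"
  unfolding P_SA_def if_not_P[OF assms] Collect_add_le_eq_atLeastAtMost ..

lemma P_SA_eq:
  fixes s t z lam :: nat
  assumes "0 < lam" "lam < z" "t \<noteq> 1"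
  defines "\<theta> \<equiv> age_theta s t lam" and "q \<equiv> age_q t z lam"
  shows "P_SA s t z lam = (\<Union>l<q. {t * s + \<theta> * l..t * s + \<theta> * l + (lam - 1)})
                          \<union> {t * s + \<theta> * q..t * s + \<theta> * q + (z - 1 - q * lam)}"
proof -
  have "w < lam \<longleftrightarrow> w \<le> lam - 1" for w using assms(1) by arith
  then have "{t * s + \<theta> * l + w | l w. l < q \<and> w < lam} = {t * s + \<theta> * l + w | l w. l < q \<and> w \<le> lam - 1}"
    by (simp only:)
  then show ?thesis
    using assms unfolding P_SA_def Collect_add_le_eq_UN Collect_add_le_eq_atLeastAtMost
    by (simp add: lessThan_def)
qed

lemma P_SA_eq_lam_0:
  assumes "0 < z" "t \<noteq> 1"
  shows "P_SA s t z 0 = {t * s * t..t * s * t + (z - 1)}"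
proof -
  have "t * s + t * s * (t - 1) = t * s * t"
    using assms by (cases t) (auto simp: algebra_simps)
  then show ?thesis
    using assms unfolding P_SA_def Collect_add_le_eq_atLeastAtMost by (simp add: age_theta_def age_q_def)
qed

lemma N_age_t_eq_1:
  assumes "0 < s" "0 < z"
  shows "N_age s 1 z lam = 2 * s + 2 * z - 1"
proof -
  have "P_CA s 1 \<union> P_SA s 1 z lam = {0..s + z - 1}"
    using assms by (auto simp: P_CA_eq P_SA_eq_atLeastAtMost)
  moreover have "P_CB s 1 lam \<union> P_SB s 1 z lam = {0..s + z - 1}"
    using assms by (auto simp: P_CB_eq P_SB_eq age_theta_def)
  ultimately show ?thesis
    using assms by (simp add: N_age_def sumset_atLeastAtMost)
qed

locale age_params =
  fixes s t z :: nat
  assumes s_pos: "0 < s" and t_ge_2: "2 \<le> t" and z_pos: "0 < z"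
begin

abbreviation A :: "nat \<Rightarrow> nat set" where "A lam \<equiv> P_CA s t \<union> P_SA s t z lam"

abbreviation B :: "nat \<Rightarrow> nat set" where "B lam \<equiv> P_CB s t lam \<union> P_SB s t z lam"

lemma s_le_ts: "s \<le> t * s"
  using t_ge_2 by simp

lemma N_age_lam_eq_z: "N_age s t z z = 2 * (t * s) + (t * s + z) * (t - 1) + 2 * z - 1"
proof -
  define \<theta> where "\<theta> = t * s + z"
  have A: "A z = {0..t * s + z - 1}"
    using s_pos t_ge_2 z_pos s_le_ts by (auto simp: P_CA_eq P_SA_eq_atLeastAtMost)
  have B: "B z = (\<Union>m\<le>t - 1. {\<theta> * m..\<theta> * m + (s - 1)}) \<union> {t * s + \<theta> * (t - 1)..t * s + \<theta> * (t - 1) + (z - 1)}"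
    by (simp add: P_CB_eq P_SB_eq age_theta_def \<theta>_def)
  have "sumset {0..t * s + z - 1} {\<theta> * m..\<theta> * m + (s - 1)} = {\<theta> * m..\<theta> * m + (t * s + z + s - 2)}" for m
  proof -
    have "t * s + z - 1 + (\<theta> * m + (s - 1)) = \<theta> * m + (t * s + z + s - 2)" using s_pos z_pos by arith
    then show ?thesis by (simp add: sumset_atLeastAtMost)
  qed
  then have "sumset {0..t * s + z - 1} (\<Union>m\<le>t - 1. {\<theta> * m..\<theta> * m + (s - 1)})
      = (\<Union>m\<le>t - 1. {\<theta> * m..\<theta> * m + (t * s + z + s - 2)})"
    by (simp only: sumset_UN_right)
  also have "\<dots> = {0..\<theta> * (t - 1) + (t * s + z + s - 2)}"
    using s_pos by (intro UN_atLeastAtMost_progression) (simp add: \<theta>_def)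
  moreover have "sumset {0..t * s + z - 1} {t * s + \<theta> * (t - 1)..t * s + \<theta> * (t - 1) + (z - 1)}
      = {t * s + \<theta> * (t - 1)..2 * (t * s) + \<theta> * (t - 1) + 2 * z - 2}"
    using z_pos by (simp add: sumset_atLeastAtMost) arith
  ultimately have "sumset (A z) (B z)
      = {0..\<theta> * (t - 1) + (t * s + z + s - 2)} \<union> {t * s + \<theta> * (t - 1)..2 * (t * s) + \<theta> * (t - 1) + 2 * z - 2}"
    unfolding A B sumset_Un_right by simp
  also have "\<dots> = {0..2 * (t * s) + \<theta> * (t - 1) + 2 * z - 2}"
    using s_pos z_pos s_le_ts by (intro atLeastAtMost_Un_overlapping) linarith+
  finally have "sumset (A z) (B z) = {0..2 * (t * s) + \<theta> * (t - 1) + 2 * z - 2}" .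
  then show ?thesis
    using z_pos unfolding N_age_def \<theta>_def by simp
qed

lemma int_N_age_lam_eq_z:
  "int (N_age s t z z) = 2 * (int t * int s) + (int t * int s + int z) * (int t - 1) + 2 * int z - 1"
proof -
  have "N_age s t z z + 1 = 2 * (t * s) + (t * s + z) * (t - 1) + 2 * z"
    using N_age_lam_eq_z z_pos by linarith
  then have "int (N_age s t z z) + 1 = 2 * (int t * int s) + (int t * int s + int z) * int (t - 1) + 2 * int z"
    by (metis (mono_tags) of_nat_1 of_nat_add of_nat_mult of_nat_numeral)
  moreover have "int (t - 1) = int t - 1" using t_ge_2 by simp
  ultimately show ?thesis by simp
qed

lemma Gamma_lam_eq_z: "Gamma s t z z = int (N_age s t z z)"
proof -
  have "Gamma s t z z = 2 * int t * int s + (int t * int s + int z) * (int t - 1) + 2 * int z - 1"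
    using z_pos by (simp add: Gamma_def Let_def)
  then show ?thesis unfolding int_N_age_lam_eq_z by (simp add: mult.assoc)
qed

text \<open>For \<open>lam = 0\<close>, block 0 is an initial interval, block \<open>i\<close> with \<open>0 < i < t\<close> is the sum of \<open>S_A\<close>
  with the \<open>i\<close>-th piece of \<open>C_B\<close>, and block \<open>t\<close> is the sum of \<open>S_A\<close> and \<open>S_B\<close>.\<close>

definition lo0 :: "nat \<Rightarrow> nat" where
  "lo0 i = (if i = 0 then 0 else t * s * t + t * s * i)"

definition hi0 :: "nat \<Rightarrow> nat" where
  "hi0 i = (if i = 0 then t * s * t + t * s + z - 2
            else if i = t then 2 * (t * s * t) + 2 * z - 2 else t * s * t + t * s * i + s + z - 2)"

lemma ts_times_t: "t * s + t * s * (t - 1) = t * s * t"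
  using t_ge_2 by (cases t) (auto simp: algebra_simps)

lemma lo0_simps: "lo0 0 = 0" "lo0 t = t * s * t + t * s * t" "0 < i \<Longrightarrow> lo0 i = t * s * t + t * s * i"
  using t_ge_2 by (simp_all add: lo0_def)

lemma hi0_simps: "hi0 0 = t * s * t + t * s + z - 2" "hi0 t = 2 * (t * s * t) + 2 * z - 2"
  "0 < i \<Longrightarrow> i < t \<Longrightarrow> hi0 i = t * s * t + t * s * i + s + z - 2"
  using t_ge_2 by (simp_all add: hi0_def)

lemma sumset_lam_0:
  "sumset (A 0) (B 0)
   = {0..t * s * (t - 1) + (t * s - 1 + (s - 1))} \<union> {t * s * t..t * s * t + (t * s - 1 + (z - 1))}
     \<union> (\<Union>m\<le>t - 1. {t * s * t + t * s * m..t * s * t + t * s * m + (z - 1 + (s - 1))})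
     \<union> {t * s * t + t * s * t..t * s * t + t * s * t + (z - 1 + (z - 1))}"
proof -
  have A: "A 0 = {0..0 + (t * s - 1)} \<union> {t * s * t..t * s * t + (z - 1)}"
    using s_pos t_ge_2 z_pos by (simp add: P_CA_eq P_SA_eq_lam_0)
  have B: "B 0 = (\<Union>m\<le>t - 1. {t * s * m..t * s * m + (s - 1)}) \<union> {t * s * t..t * s * t + (z - 1)}"
    using ts_times_t by (simp add: P_CB_eq P_SB_eq age_theta_def)
  have "sumset {0..0 + (t * s - 1)} (\<Union>m\<le>t - 1. {t * s * m..t * s * m + (s - 1)})
      = (\<Union>m\<le>t - 1. {t * s * m..t * s * m + (t * s - 1 + (s - 1))})"
    unfolding sumset_UN_right sumset_atLeastAtMost_add by simp
  also have "\<dots> = {0..t * s * (t - 1) + (t * s - 1 + (s - 1))}"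
    using s_pos t_ge_2 by (intro UN_atLeastAtMost_progression) simp
  finally show ?thesis
    unfolding A B sumset_Un_left sumset_Un_right sumset_UN_right sumset_atLeastAtMost_add
    by (simp only: UN_Un_distrib add_0 Un_ac)
qed

lemma sumset_lam_0_subset_blocks: "sumset (A 0) (B 0) \<subseteq> (\<Union>i\<le>t. {lo0 i..hi0 i})"
proof -
  have in_block: "i \<le> t \<Longrightarrow> lo0 i \<le> x \<Longrightarrow> x \<le> hi0 i \<Longrightarrow> x \<in> (\<Union>i\<le>t. {lo0 i..hi0 i})" for i x
    by auto
  note facts = lo0_simps hi0_simps ts_times_t s_le_ts s_pos z_pos
  show ?thesis
    unfolding sumset_lam_0
  proof (intro subsetI, elim UnE UN_E)
    fix x assume "x \<in> {0..t * s * (t - 1) + (t * s - 1 + (s - 1))}"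
    then have "x \<le> t * s * (t - 1) + (t * s - 1 + (s - 1))" by simp
    then show "x \<in> (\<Union>i\<le>t. {lo0 i..hi0 i})" using in_block[of 0 x] facts by linarith
  next
    fix x assume "x \<in> {t * s * t..t * s * t + (t * s - 1 + (z - 1))}"
    then have "x \<le> t * s * t + (t * s - 1 + (z - 1))" by simp
    then show "x \<in> (\<Union>i\<le>t. {lo0 i..hi0 i})" using in_block[of 0 x] facts by linarith
  next
    fix x m assume m: "m \<in> {..t - 1}" and x: "x \<in> {t * s * t + t * s * m..t * s * t + t * s * m + (z - 1 + (s - 1))}"
    show "x \<in> (\<Union>i\<le>t. {lo0 i..hi0 i})"
    proof (cases "m = 0")
      case True
      then have "x \<le> t * s * t + (z - 1 + (s - 1))" using x by simp
      then show ?thesis using in_block[of 0 x] facts by linarith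
    next
      case False
      then have "m < t" "lo0 m \<le> x" "x \<le> hi0 m" using m x facts by auto
      then show ?thesis using in_block[of m x] by simp
    qed
  next
    fix x assume "x \<in> {t * s * t + t * s * t..t * s * t + t * s * t + (z - 1 + (z - 1))}"
    then have "t * s * t + t * s * t \<le> x" "x \<le> t * s * t + t * s * t + (z - 1 + (z - 1))" by simp_all
    then show "x \<in> (\<Union>i\<le>t. {lo0 i..hi0 i})" using in_block[of t x] facts by linarith
  qed
qed

lemma blocks_subset_sumset_lam_0: "(\<Union>i\<le>t. {lo0 i..hi0 i}) \<subseteq> sumset (A 0) (B 0)"
proof
  fix x assume "x \<in> (\<Union>i\<le>t. {lo0 i..hi0 i})"
  then obtain i where i: "i \<le> t" "lo0 i \<le> x" "x \<le> hi0 i" by auto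
  consider "i = 0" "x < t * s * t" | "i = 0" "t * s * t \<le> x" | "i = t" | "0 < i" "i < t"
    using i(1) by linarith
  then show "x \<in> sumset (A 0) (B 0)"
  proof cases
    case 1
    then have "x \<le> t * s * (t - 1) + (t * s - 1 + (s - 1))" using ts_times_t by linarith
    then show ?thesis unfolding sumset_lam_0 by simp
  next
    case 2
    then have "x \<le> t * s * t + (t * s - 1 + (z - 1))" using i hi0_simps by simp
    then show ?thesis unfolding sumset_lam_0 using 2 by simp
  next
    case 3
    then have "lo0 t \<le> x" "x \<le> hi0 t" using i by simp_all
    then have "t * s * t + t * s * t \<le> x" "x \<le> t * s * t + t * s * t + (z - 1 + (z - 1))"
      using lo0_simps hi0_simps z_pos by linarith+
    then show ?thesis unfolding sumset_lam_0 by simp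
  next
    case 4
    then have "x \<in> {t * s * t + t * s * i..t * s * t + t * s * i + (z - 1 + (s - 1))}"
      using i lo0_simps hi0_simps by simp
    then show ?thesis unfolding sumset_lam_0 using 4 by auto
  qed
qed

lemma N_age_lam_eq_0: "N_age s t z 0 + (t - 1) * (t * s + 1 - (s + z)) = 2 * (t * s * t) + 2 * z - 1"
proof -
  note facts = lo0_simps hi0_simps ts_times_t s_le_ts s_pos z_pos t_ge_2
  have "lo0 i \<le> lo0 (Suc i) \<and> hi0 i \<le> hi0 (Suc i)" if "i < t" for i
  proof (cases "i = 0")
    case True
    then show ?thesis using facts hi0_simps(3)[of 1] by simp
  next
    case False
    then show ?thesis
      using that facts lo0_simps(3)[of "Suc i"] hi0_simps(3)[of "Suc i"] by (cases "Suc i = t") auto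
  qed
  moreover have "lo0 i \<le> hi0 i" if "i \<le> t" for i
    using that facts by (cases "i = 0"; cases "i = t") auto
  ultimately have "card (\<Union>i\<le>t. {lo0 i..hi0 i}) + (\<Sum>i<t. lo0 (Suc i) - Suc (hi0 i)) = Suc (hi0 t) - lo0 0"
    by (intro card_UN_atLeastAtMost_chain)
  moreover have "(\<Sum>i<t. lo0 (Suc i) - Suc (hi0 i)) = (t - 1) * (t * s + 1 - (s + z))"
  proof -
    obtain t' where t': "t = Suc t'" using t_ge_2 by (cases t) auto
    have "lo0 (Suc (Suc i)) - Suc (hi0 (Suc i)) = t * s + 1 - (s + z)" if "i < t'" for i
      using that t' facts by simp
    then have "(\<Sum>i<t'. lo0 (Suc (Suc i)) - Suc (hi0 (Suc i))) = t' * (t * s + 1 - (s + z))"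
      by simp
    moreover have "lo0 (Suc 0) - Suc (hi0 0) = 0" using facts by simp
    ultimately show ?thesis unfolding t' sum.lessThan_Suc_shift by simp
  qed
  moreover have "sumset (A 0) (B 0) = (\<Union>i\<le>t. {lo0 i..hi0 i})"
    using sumset_lam_0_subset_blocks blocks_subset_sumset_lam_0 by (rule antisym)
  moreover have "Suc (hi0 t) - lo0 0 = 2 * (t * s * t) + 2 * z - 1"
    using lo0_simps(1) hi0_simps(2) z_pos by linarith
  ultimately show ?thesis
    unfolding N_age_def by simp
qed

lemma int_N_age_lam_eq_0:
  "int (N_age s t z 0)
   = 2 * (int t * int s) * int t + 2 * int z - 1 - (int t - 1) * max 0 (int t * int s + 1 - (int s + int z))"
proof -
  have "N_age s t z 0 + (t - 1) * (t * s + 1 - (s + z)) + 1 = 2 * (t * s * t) + 2 * z"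
    using N_age_lam_eq_0 z_pos by linarith
  then have "int (N_age s t z 0) + int (t - 1) * int (t * s + 1 - (s + z)) + 1 = 2 * (int t * int s * int t) + 2 * int z"
    by (metis (mono_tags) of_nat_1 of_nat_add of_nat_mult of_nat_numeral)
  moreover have "int (t - 1) = int t - 1" using t_ge_2 by simp
  ultimately show ?thesis unfolding int_diff_eq_max by (simp add: algebra_simps)
qed

end

text \<open>For \<open>0 < lam < z\<close> there are \<open>q + 1\<close> blocks, block 0 starting at 0.  Block \<open>i\<close> with \<open>0 < i < q\<close> starts with the sum
  of the \<open>i\<close>-th piece of \<open>S_A\<close> and \<open>S_B\<close>, which reaches up to \<open>t s + \<theta> (t + i) + z - 2\<close>, and
  continues with sums landing at \<open>t s + \<theta> (t + i)\<close>, which reach \<open>M i - 2\<close> further.  The last block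
  is the sum of the last pieces of \<open>S_A\<close> and \<open>S_B\<close>.\<close>

locale age_interior = age_params +
  fixes lam :: nat
  assumes lam_pos: "0 < lam" and lam_less_z: "lam < z"
begin

definition \<theta> :: nat where "\<theta> = t * s + lam"

abbreviation q :: nat where "q \<equiv> age_q t z lam"

definition r :: nat where "r = z - 1 - q * lam"

definition M :: "nat \<Rightarrow> nat" where
  "M i = (if i = q - 1 then max z (r + 1 + s) else max z (max (lam + s) (r + 1 + s)))"

definition lo :: "nat \<Rightarrow> nat" where
  "lo i = (if i = 0 then 0 else 2 * (t * s) + \<theta> * (t - 1) + \<theta> * i)"

definition hi :: "nat \<Rightarrow> nat" where
  "hi i = (if i = q then 2 * (t * s) + \<theta> * (t - 1) + \<theta> * q + r + z - 1
           else t * s + \<theta> * t + \<theta> * i + M i - 2)"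

lemma q_pos: "1 \<le> q"
  and q_le: "q \<le> t - 1"
  and q_mult_le: "q * lam \<le> z - 1"
  and q_maximal: "q < t - 1 \<Longrightarrow> z \<le> (q + 1) * lam"
proof -
  have q_eq: "q = min ((z - 1) div lam) (t - 1)" using lam_pos unfolding age_q_def by auto
  have "lam \<le> z - 1" using lam_less_z by simp
  then have "1 \<le> (z - 1) div lam" using lam_pos by (simp add: less_eq_div_iff_mult_less_eq)
  then show "1 \<le> q" using q_eq t_ge_2 by simp
  show "q \<le> t - 1" using q_eq by simp
  have "q * lam \<le> (z - 1) div lam * lam" using q_eq by simp
  also have "\<dots> \<le> z - 1" by simp
  finally show "q * lam \<le> z - 1" .
  assume "q < t - 1"
  then have "q = (z - 1) div lam" using q_eq by simp
  moreover have "z - 1 < ((z - 1) div lam + 1) * lam"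
    using div_less_iff_less_mult[OF lam_pos, of "z - 1" "(z - 1) div lam + 1"] by simp
  ultimately show "z \<le> (q + 1) * lam" by simp
qed

lemma r_eq: "r + q * lam + 1 = z"
  using q_mult_le lam_less_z unfolding r_def by linarith

lemma theta_times_t: "\<theta> * (t - 1) + \<theta> = \<theta> * t"
  using t_ge_2 by (cases t) auto

lemma theta_mult_add: "\<theta> * l + \<theta> * m = \<theta> * (l + m)"
  by (simp add: distrib_left)

lemma A_eq: "A lam = {0..0 + (t * s - 1)} \<union> (\<Union>l<q. {t * s + \<theta> * l..t * s + \<theta> * l + (lam - 1)})
                     \<union> {t * s + \<theta> * q..t * s + \<theta> * q + r}"
  using s_pos t_ge_2 lam_pos lam_less_z by (simp add: P_CA_eq P_SA_eq age_theta_def \<theta>_def r_def Un_assoc)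

lemma B_eq: "B lam = (\<Union>m\<le>t - 1. {\<theta> * m..\<theta> * m + (s - 1)})
                     \<union> {t * s + \<theta> * (t - 1)..t * s + \<theta> * (t - 1) + (z - 1)}"
  by (simp add: P_CB_eq P_SB_eq age_theta_def \<theta>_def)

lemma sumset_eq_pieces:
  "sumset (A lam) (B lam)
   = (\<Union>m\<le>t - 1. {\<theta> * m..\<theta> * m + (t * s - 1 + (s - 1))})
   \<union> (\<Union>m\<le>t - 1. \<Union>l<q. {t * s + \<theta> * l + \<theta> * m..t * s + \<theta> * l + \<theta> * m + (lam - 1 + (s - 1))})
   \<union> (\<Union>m\<le>t - 1. {t * s + \<theta> * q + \<theta> * m..t * s + \<theta> * q + \<theta> * m + (r + (s - 1))})
   \<union> {t * s + \<theta> * (t - 1)..t * s + \<theta> * (t - 1) + (t * s - 1 + (z - 1))}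
   \<union> (\<Union>l<q. {t * s + \<theta> * l + (t * s + \<theta> * (t - 1))
               ..t * s + \<theta> * l + (t * s + \<theta> * (t - 1)) + (lam - 1 + (z - 1))})
   \<union> {t * s + \<theta> * q + (t * s + \<theta> * (t - 1))..t * s + \<theta> * q + (t * s + \<theta> * (t - 1)) + (r + (z - 1))}"
  unfolding A_eq B_eq sumset_Un_left sumset_Un_right sumset_UN_left sumset_UN_right sumset_atLeastAtMost_add
  by (simp only: UN_Un_distrib add_0 Un_ac)

lemma A_low: "{0..0 + (t * s - 1)} \<subseteq> A lam"
  and A_mid: "l < q \<Longrightarrow> {t * s + \<theta> * l..t * s + \<theta> * l + (lam - 1)} \<subseteq> A lam"
  and A_top: "{t * s + \<theta> * q..t * s + \<theta> * q + r} \<subseteq> A lam"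
  unfolding A_eq by auto

lemma B_low: "m \<le> t - 1 \<Longrightarrow> {\<theta> * m..\<theta> * m + (s - 1)} \<subseteq> B lam"
  and B_top: "{t * s + \<theta> * (t - 1)..t * s + \<theta> * (t - 1) + (z - 1)} \<subseteq> B lam"
  unfolding B_eq by auto

lemma M_ge: "z \<le> M i" "r + 1 + s \<le> M i" "i \<noteq> q - 1 \<Longrightarrow> lam + s \<le> M i"
  unfolding M_def by auto

lemma M_le: "M i \<le> \<theta> + z"
proof -
  have "lam + s \<le> \<theta> + z" "r + 1 + s \<le> \<theta> + z" using s_le_ts r_eq unfolding \<theta>_def by linarith+
  then show ?thesis unfolding M_def by auto
qed

lemma lo_0: "lo 0 = 0"
  and lo_pos: "0 < i \<Longrightarrow> lo i = 2 * (t * s) + \<theta> * (t - 1) + \<theta> * i"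
  unfolding lo_def by simp_all

lemma hi_q: "hi q = 2 * (t * s) + \<theta> * (t - 1) + \<theta> * q + r + z - 1"
  and hi_less: "i < q \<Longrightarrow> hi i = t * s + \<theta> * t + \<theta> * i + M i - 2"
  unfolding hi_def by simp_all

lemma hi_0: "hi 0 = t * s + \<theta> * t + M 0 - 2"
  using hi_less[of 0] q_pos by simp

lemma in_blocks: "i \<le> q \<Longrightarrow> lo i \<le> x \<Longrightarrow> x \<le> hi i \<Longrightarrow> x \<in> (\<Union>i\<le>q. {lo i..hi i})"
  by auto

lemma in_block_0: "x \<le> hi 0 \<Longrightarrow> x \<in> (\<Union>i\<le>q. {lo i..hi i})"
  using in_blocks[of 0 x] lo_0 by simp

lemma shifted_piece_in_blocks:
  assumes "k < t + q" "t * s + \<theta> * k \<le> x" "x \<le> t * s + \<theta> * k + w"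
    and "w + 2 \<le> \<theta> + M 0" and "t \<le> k \<Longrightarrow> w + 2 \<le> M (k - t)"
  shows "x \<in> (\<Union>i\<le>q. {lo i..hi i})"
proof (cases "k < t")
  case True
  then have "k \<le> t - 1" by linarith
  then have "\<theta> * k \<le> \<theta> * (t - 1)" by simp
  then show ?thesis using assms(3,4) hi_0 theta_times_t by (intro in_block_0) linarith
next
  case False
  define j where "j = k - t"
  have j: "\<theta> * k = \<theta> * t + \<theta> * j" "j < q" "w + 2 \<le> M j"
    using False assms(1,5) unfolding j_def theta_mult_add by simp_all
  show ?thesis
  proof (cases "j = 0")
    case True
    then show ?thesis using assms(3) j hi_0 by (intro in_block_0) simp
  next
    case False
    then have "lo j \<le> x" "x \<le> hi j"
      using assms(2,3) j lo_pos[of j] hi_less[of j] theta_times_t \<theta>_def by simp_all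
    then show ?thesis using j by (intro in_blocks) simp_all
  qed
qed

lemma secret_sum_in_blocks:
  assumes "l < q" "t * s + \<theta> * l + (t * s + \<theta> * (t - 1)) \<le> x"
    and "x \<le> t * s + \<theta> * l + (t * s + \<theta> * (t - 1)) + (lam - 1 + (z - 1))"
  shows "x \<in> (\<Union>i\<le>q. {lo i..hi i})"
proof (cases "l = 0")
  case True
  then show ?thesis
    using assms(3) hi_0 theta_times_t \<theta>_def M_ge(1)[of 0] lam_pos z_pos by (intro in_block_0) simp
next
  case False
  then show ?thesis
    using assms M_ge(1)[of l] lo_pos[of l] hi_less[of l] theta_times_t \<theta>_def lam_pos z_pos
    by (intro in_blocks[of l]) simp_all
qed

lemma sumset_subset_blocks: "sumset (A lam) (B lam) \<subseteq> (\<Union>i\<le>q. {lo i..hi i})"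
proof -
  have ts_theta: "t * s + lam = \<theta>" unfolding \<theta>_def ..
  note facts = hi_0 theta_times_t ts_theta s_le_ts s_pos lam_pos z_pos M_ge(1,2)[of 0]
  show ?thesis
    unfolding sumset_eq_pieces
  proof (intro subsetI, elim UnE UN_E)
    fix x m assume m: "m \<in> {..t - 1}" and "x \<in> {\<theta> * m..\<theta> * m + (t * s - 1 + (s - 1))}"
    then have "x \<le> \<theta> * m + (t * s - 1 + (s - 1))" "\<theta> * m \<le> \<theta> * (t - 1)" by simp_all
    then show "x \<in> (\<Union>i\<le>q. {lo i..hi i})" using facts by (intro in_block_0) linarith
  next
    fix x m l assume "m \<in> {..t - 1}" "l \<in> {..<q}"
      and x: "x \<in> {t * s + \<theta> * l + \<theta> * m..t * s + \<theta> * l + \<theta> * m + (lam - 1 + (s - 1))}"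
    then have lm: "l < q" "m \<le> t - 1" by simp_all
    have "lam + s \<le> M (l + m - t)" if "t \<le> l + m"
      using lm that t_ge_2 by (intro M_ge(3)) linarith
    moreover have "t * s + \<theta> * (l + m) \<le> x" "x \<le> t * s + \<theta> * (l + m) + (lam - 1 + (s - 1))"
      using x by (simp_all add: distrib_left)
    ultimately show "x \<in> (\<Union>i\<le>q. {lo i..hi i})"
      using lm facts by (intro shifted_piece_in_blocks[where k = "l + m" and w = "lam - 1 + (s - 1)"]) auto
  next
    fix x m assume m: "m \<in> {..t - 1}"
      and x: "x \<in> {t * s + \<theta> * q + \<theta> * m..t * s + \<theta> * q + \<theta> * m + (r + (s - 1))}"
    then have "t * s + \<theta> * (q + m) \<le> x" "x \<le> t * s + \<theta> * (q + m) + (r + (s - 1))"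
      by (simp_all add: distrib_left)
    then show "x \<in> (\<Union>i\<le>q. {lo i..hi i})"
      using m facts M_ge(2)[of "q + m - t"] t_ge_2
      by (intro shifted_piece_in_blocks[where k = "q + m" and w = "r + (s - 1)"]) auto
  next
    fix x assume "x \<in> {t * s + \<theta> * (t - 1)..t * s + \<theta> * (t - 1) + (t * s - 1 + (z - 1))}"
    then have "x \<le> t * s + \<theta> * (t - 1) + (t * s - 1 + (z - 1))" by simp
    then show "x \<in> (\<Union>i\<le>q. {lo i..hi i})" using facts by (intro in_block_0) linarith
  next
    fix x l assume "l \<in> {..<q}"
      and "x \<in> {t * s + \<theta> * l + (t * s + \<theta> * (t - 1))..t * s + \<theta> * l + (t * s + \<theta> * (t - 1)) + (lam - 1 + (z - 1))}"
    then show "x \<in> (\<Union>i\<le>q. {lo i..hi i})" by (intro secret_sum_in_blocks[of l]) simp_all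
  next
    fix x assume "x \<in> {t * s + \<theta> * q + (t * s + \<theta> * (t - 1))..t * s + \<theta> * q + (t * s + \<theta> * (t - 1)) + (r + (z - 1))}"
    then have "t * s + \<theta> * q + (t * s + \<theta> * (t - 1)) \<le> x"
      "x \<le> t * s + \<theta> * q + (t * s + \<theta> * (t - 1)) + (r + (z - 1))" by simp_all
    moreover have "lo q = 2 * (t * s) + \<theta> * (t - 1) + \<theta> * q" using q_pos by (simp add: lo_pos)
    ultimately show "x \<in> (\<Union>i\<le>q. {lo i..hi i})"
      using hi_q z_pos by (intro in_blocks[of q]) linarith+
  qed
qed

lemma middle_in_sumset:
  assumes "i < q" "2 * (t * s) + \<theta> * (t - 1) + \<theta> * i \<le> x" "x \<le> t * s + \<theta> * t + \<theta> * i + z - 2"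
  shows "x \<in> sumset (A lam) (B lam)"
  using assms theta_times_t lam_pos z_pos \<theta>_def
  by (intro mem_sumset_atLeastAtMost[OF A_mid[OF assms(1)] B_top]) linarith+

lemma bottom_in_sumset:
  assumes "x \<le> t * s + \<theta> * t + z - 2"
  shows "x \<in> sumset (A lam) (B lam)"
proof -
  have theta: "\<theta> = t * s + lam" by (rule \<theta>_def)
  consider "x \<le> \<theta> * (t - 1) + (t * s + lam - 1 + (s - 1))"
    | "t * s + \<theta> * (t - 1) \<le> x" "x \<le> t * s + \<theta> * (t - 1) + (t * s - 1 + (z - 1))"
    | "2 * (t * s) + \<theta> * (t - 1) \<le> x"
    using theta theta_times_t s_pos z_pos by linarith
  then show ?thesis
  proof cases
    case 1
    moreover have "(\<Union>m\<le>t - 1. {\<theta> * m..\<theta> * m + (t * s + lam - 1 + (s - 1))})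
        = {0..\<theta> * (t - 1) + (t * s + lam - 1 + (s - 1))}"
      using s_pos theta by (intro UN_atLeastAtMost_progression) simp
    ultimately have "x \<in> (\<Union>m\<le>t - 1. {\<theta> * m..\<theta> * m + (t * s + lam - 1 + (s - 1))})"
      by simp
    then obtain m where m: "m \<le> t - 1" "\<theta> * m \<le> x" "x \<le> \<theta> * m + (t * s + lam - 1 + (s - 1))"
      by auto
    show ?thesis
    proof (cases "x \<le> \<theta> * m + (t * s - 1 + (s - 1))")
      case True
      then show ?thesis using m by (intro mem_sumset_atLeastAtMost[OF A_low B_low[OF m(1)]]) simp_all
    next
      case False
      then show ?thesis
        using m q_pos s_pos lam_pos
        by (intro mem_sumset_atLeastAtMost[OF A_mid[of 0] B_low[OF m(1)]]) simp_all
    qed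
  next
    case 2
    then show ?thesis by (intro mem_sumset_atLeastAtMost[OF A_low B_top]) simp_all
  next
    case 3
    then show ?thesis using assms q_pos by (intro middle_in_sumset[of 0]) simp_all
  qed
qed

lemma top_in_sumset:
  assumes "i < q" "t * s + \<theta> * t + \<theta> * i \<le> x" "x \<le> hi i"
  shows "x \<in> sumset (A lam) (B lam)"
proof -
  have x: "x \<le> t * s + \<theta> * t + \<theta> * i + M i - 2" using assms(3) hi_less[OF assms(1)] by simp
  have "M i = z \<or> (i \<noteq> q - 1 \<and> M i = lam + s) \<or> M i = r + 1 + s" unfolding M_def by auto
  then show ?thesis
  proof (elim disjE conjE)
    assume "M i = z"
    then show ?thesis using x assms(1,2) \<theta>_def theta_times_t by (intro middle_in_sumset[of i]) linarith+
  next
    assume "i \<noteq> q - 1" "M i = lam + s"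
    moreover have "\<theta> * (i + 1) + \<theta> * (t - 1) = \<theta> * t + \<theta> * i"
      using theta_times_t by (simp add: algebra_simps)
    ultimately show ?thesis
      using x assms t_ge_2 s_pos lam_pos
      by (intro mem_sumset_atLeastAtMost[OF A_mid[of "i + 1"] B_low[of "t - 1"]]) simp_all
  next
    assume "M i = r + 1 + s"
    moreover have "\<theta> * q + \<theta> * (t + i - q) = \<theta> * t + \<theta> * i"
      using q_le assms(1) unfolding theta_mult_add by simp
    ultimately show ?thesis
      using x assms q_le s_pos
      by (intro mem_sumset_atLeastAtMost[OF A_top B_low[of "t + i - q"]]) simp_all
  qed
qed

lemma blocks_subset_sumset: "(\<Union>i\<le>q. {lo i..hi i}) \<subseteq> sumset (A lam) (B lam)"
proof
  fix x assume "x \<in> (\<Union>i\<le>q. {lo i..hi i})"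
  then obtain i where i: "i \<le> q" "lo i \<le> x" "x \<le> hi i" by auto
  consider "i = q" | "i = 0" "x < t * s + \<theta> * t" | "0 < i" "i < q" "x < t * s + \<theta> * t + \<theta> * i"
    | "i < q" "t * s + \<theta> * t + \<theta> * i \<le> x"
    using i(1) by fastforce
  then show "x \<in> sumset (A lam) (B lam)"
  proof cases
    case 1
    then show ?thesis
      using i q_pos lo_pos[of q] hi_q by (intro mem_sumset_atLeastAtMost[OF A_top B_top]) simp_all
  next
    case 2
    then show ?thesis using z_pos by (intro bottom_in_sumset) simp
  next
    case 3
    then have "2 * (t * s) + \<theta> * (t - 1) + \<theta> * i \<le> x" using i lo_pos[of i] by simp
    then show ?thesis using 3 z_pos by (intro middle_in_sumset[of i]) linarith+
  next
    case 4
    then show ?thesis using i by (intro top_in_sumset)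
  qed
qed

lemma blocks_mono: "i < q \<Longrightarrow> lo i \<le> lo (Suc i) \<and> hi i \<le> hi (Suc i)"
proof
  assume i: "i < q"
  show "lo i \<le> lo (Suc i)" unfolding lo_def by simp
  show "hi i \<le> hi (Suc i)"
  proof (cases "Suc i = q")
    case True
    have "M i \<le> z + r + 1 + s" using True unfolding M_def by auto
    moreover have "\<theta> * q = \<theta> * i + \<theta>" using True by (metis mult_Suc_right add.commute)
    moreover have "hi (Suc i) = hi q" using True by simp
    ultimately show ?thesis
      using hi_less[OF i] hi_q \<theta>_def theta_times_t s_le_ts by linarith
  next
    case False
    then have "Suc i < q" using i by simp
    then show ?thesis
      using hi_less[OF i] hi_less[OF \<open>Suc i < q\<close>] M_le[of i] M_ge(1)[of "Suc i"] by simp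
  qed
qed

lemma blocks_nonempty:
  assumes "i \<le> q"
  shows "lo i \<le> hi i"
proof -
  consider "i = 0" | "i = q" | "0 < i" "i < q" using assms by linarith
  then show ?thesis
  proof cases
    case 1
    then show ?thesis using lo_0 by simp
  next
    case 2
    then show ?thesis using q_pos lo_pos[of q] hi_q z_pos by simp
  next
    case 3
    then show ?thesis
      using lo_pos[OF 3(1)] hi_less[OF 3(2)] M_ge(1)[of i] lam_pos z_pos \<theta>_def theta_times_t by linarith
  qed
qed

lemma sum_gaps:
  "(\<Sum>i<q. lo (Suc i) - Suc (hi i))
   = (q - 1) * (t * s + 1 - max z (max (lam + s) (r + 1 + s))) + (t * s + 1 - max z (r + 1 + s))"
proof -
  have "lo (Suc i) - Suc (hi i) = t * s + 1 - M i" if "i < q" for i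
  proof -
    have "\<theta> * Suc i = \<theta> * i + \<theta>" by simp
    then show ?thesis
      using lo_pos[of "Suc i"] hi_less[OF that] M_ge(1)[of i] lam_less_z \<theta>_def theta_times_t by linarith
  qed
  then have "(\<Sum>i<q. lo (Suc i) - Suc (hi i)) = (\<Sum>i<q. t * s + 1 - M i)"
    by simp
  also have "\<dots> = (q - 1) * (t * s + 1 - max z (max (lam + s) (r + 1 + s))) + (t * s + 1 - max z (r + 1 + s))"
  proof -
    obtain p where q: "q = Suc p" using q_pos by (cases q) auto
    have "(\<Sum>i<p. t * s + 1 - M i) = p * (t * s + 1 - max z (max (lam + s) (r + 1 + s)))"
      using q unfolding M_def by simp
    then show ?thesis unfolding q M_def by simp
  qed
  finally show ?thesis .
qed

lemma N_age_eq:
  "N_age s t z lam + (q - 1) * (t * s + 1 - max z (max (lam + s) (r + 1 + s))) + (t * s + 1 - max z (r + 1 + s))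
   = 2 * (t * s) + \<theta> * (t - 1) + \<theta> * q + r + z"
proof -
  have "card (\<Union>i\<le>q. {lo i..hi i}) + (\<Sum>i<q. lo (Suc i) - Suc (hi i)) = Suc (hi q) - lo 0"
    using blocks_mono blocks_nonempty by (intro card_UN_atLeastAtMost_chain)
  moreover have "sumset (A lam) (B lam) = (\<Union>i\<le>q. {lo i..hi i})"
    using sumset_subset_blocks blocks_subset_sumset by (rule antisym)
  ultimately show ?thesis
    using hi_q lo_0 lam_less_z unfolding N_age_def sum_gaps by simp
qed

end

text \<open>Integer arithmetic behind the comparison with \<open>Gamma\<close> for \<open>0 < lam < z\<close>: \<open>S, T, Z, L, Q\<close>
  stand for \<open>s, t, z, lam, q\<close>, and \<open>count\<close> is the closed form of \<open>N(lam)\<close>.\<close>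

locale interior_arith =
  fixes S T Z L Q :: int
  assumes S_pos: "1 \<le> S" and T_ge_2: "2 \<le> T" and L_pos: "1 \<le> L" and L_less_Z: "L < Z"
    and Q_pos: "1 \<le> Q" and Q_le: "Q \<le> T - 1" and Q_mult_le: "Q * L \<le> Z - 1"
    and Q_maximal: "Q < T - 1 \<Longrightarrow> Z \<le> (Q + 1) * L"
begin

definition G1 :: int where "G1 = max 0 (T * S + 1 - max Z (max (L + S) (Z - Q * L + S)))"

definition G2 :: int where "G2 = max 0 (T * S + 1 - max Z (Z - Q * L + S))"

definition count :: int where
  "count = (Q + 2) * (T * S) + (T * S + L) * (T - 1) + 2 * Z - 1 - (Q - 1) * G1 - G2"

definition Upsilon3 :: int where "Upsilon3 = 2 * (T * S) + (T * S + Z) * (T - 1) + 2 * Z - 1"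

lemma S_le_TS: "S \<le> T * S"
  using mult_right_mono[of 1 T S] T_ge_2 S_pos by simp

lemma agree_Upsilon4:
  assumes "Z > T * S"
  shows "agree_above Upsilon3 count ((Q + 2) * T * S + (T * S + L) * (T - 1) + 2 * Z - 1)"
proof -
  have "G1 = 0" "G2 = 0" unfolding G1_def G2_def using assms by auto
  then show ?thesis unfolding agree_above_def count_def by (simp add: algebra_simps)
qed

lemma agree_Upsilon5:
  assumes "\<not> Z > T * S" "T * S < L + S - 1"
  shows "agree_above Upsilon3 count (3 * T * S + (T * S + L) * (T - 1) + 2 * Z - 1)"
proof -
  have G1: "G1 = 0" and G2: "G2 \<le> T * S + 1 - Z" unfolding G1_def G2_def using assms by auto
  have le: "(Z - L) * (T - 1) \<le> (S - 2) * (T - 1)" using assms T_ge_2 by (intro mult_right_mono) auto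
  have e: "(S - 2) * (T - 1) = T * S - S - 2 * T + 2" by (simp add: algebra_simps)
  have "T * S \<le> Q * (T * S)" using mult_right_mono[of 1 Q "T * S"] Q_pos S_le_TS S_pos by simp
  moreover have "count - Upsilon3 = Q * (T * S) - (Z - L) * (T - 1) - G2"
    unfolding count_def Upsilon3_def G1 by (simp add: algebra_simps)
  moreover have "3 * T * S + (T * S + L) * (T - 1) + 2 * Z - 1 - Upsilon3 = T * S - (Z - L) * (T - 1)"
    unfolding Upsilon3_def by (simp add: algebra_simps)
  ultimately have "Upsilon3 \<le> count" "Upsilon3 \<le> 3 * T * S + (T * S + L) * (T - 1) + 2 * Z - 1"
    using le e G2 assms S_pos T_ge_2 L_less_Z by linarith+
  then show ?thesis unfolding agree_above_def by simp
qed

lemma agree_Upsilon6: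
  assumes "\<not> Z > T * S" "L + S - 1 < Z" "Q * L \<ge> S"
  shows "agree_above Upsilon3 count (2 * T * S + (T * S + L) * (T - 1) + (Q + 2) * Z - Q - 1)"
proof -
  have g1: "G1 = T * S + 1 - Z" and g2: "G2 = T * S + 1 - Z" unfolding G1_def G2_def using assms by auto
  show ?thesis unfolding agree_above_def count_def g1 g2 by (simp add: algebra_simps)
qed

lemma Q_eq_if_Q_mult_less:
  assumes "L + S - 1 < Z" "\<not> Q * L \<ge> S"
  shows "Q = T - 1"
proof (rule ccontr)
  assume "Q \<noteq> T - 1"
  then have "Z \<le> Q * L + L" using Q_maximal Q_le by (simp add: algebra_simps)
  then show False using assms by simp
qed

lemma agree_Upsilon7:
  assumes "\<not> Z > T * S" "L + S - 1 < Z" "\<not> Q * L \<ge> S"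
  shows "agree_above Upsilon3 count
    ((T * S + L) * (T + 1) + Q * (Z - 1) - 2 * L + Z + T * S + min 0 (Z + S * (1 - T) - L * Q - 1))"
proof -
  have Q: "Q = T - 1" using Q_eq_if_Q_mult_less assms(2,3) .
  define g where "g = max 0 (T * S + 1 - Z + Q * L - S)"
  have "max Z (max (L + S) (Z - Q * L + S)) = Z - Q * L + S" "max Z (Z - Q * L + S) = Z - Q * L + S"
    using assms by auto
  then have G: "G1 = g" "G2 = g" unfolding G1_def G2_def g_def by (simp_all add: algebra_simps)
  have "g \<le> T * S + L - Z" unfolding g_def using assms L_pos by auto
  then have "0 \<le> (T - 1) * (T * S + L - Z - g)" using T_ge_2 by simp
  moreover have "count - Upsilon3 = (T - 1) * (T * S + L - Z - g)"
    unfolding count_def Upsilon3_def G by (simp add: Q algebra_simps)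
  ultimately have "Upsilon3 \<le> count" by simp
  define X where "X = Z + S * (1 - T) - L * Q - 1"
  have "(T - 1) * 1 \<le> (T - 1) * L" using T_ge_2 L_pos by (intro mult_left_mono) auto
  then have "T - 1 < S" using assms Q by (simp add: algebra_simps)
  moreover have "0 \<le> (T - 1) * (L - 1)" using T_ge_2 L_pos by simp
  moreover have "T * S + (T - 1) * (L - 1) - Z + 1 + X = S - T + 1"
    unfolding X_def Q by (simp add: algebra_simps)
  ultimately have "0 \<le> T * S + (T - 1) * (L - 1) - Z + 1 + min 0 X" using assms by (auto simp: min_def)
  moreover have "(T * S + L) * (T + 1) + Q * (Z - 1) - 2 * L + Z + T * S + min 0 X - Upsilon3
      = T * S + (T - 1) * (L - 1) - Z + 1 + min 0 X"
    unfolding Upsilon3_def Q by (simp add: algebra_simps)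
  ultimately show ?thesis
    using \<open>Upsilon3 \<le> count\<close> unfolding agree_above_def X_def by linarith
qed

lemma agree_Upsilon8:
  assumes "\<not> Z > T * S" "\<not> T * S < L + S - 1" "\<not> L + S - 1 < Z" "Q * L \<ge> S"
  shows "agree_above Upsilon3 count
    (2 * T * S + (T * S + L) * (T - 1) + 3 * Z + (L + S - 1) * Q - L - S - 1)"
proof -
  have g1: "G1 = T * S + 1 - L - S" and g2: "G2 = T * S + 1 - Z" unfolding G1_def G2_def using assms by auto
  show ?thesis unfolding agree_above_def count_def g1 g2 by (simp add: algebra_simps)
qed

lemma agree_Upsilon9:
  assumes "\<not> Z > T * S" "\<not> T * S < L + S - 1" "\<not> L + S - 1 < Z" "\<not> Q * L \<ge> S"
  shows "agree_above Upsilon3 count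
    ((T * S + L) * (T + 1) + Q * (S - 1) - 3 * L + 3 * Z - 1 + min 0 (T * S - Z + 1 + L * Q - S))"
    (is "agree_above _ _ ?Upsilon9")
proof (cases "Q < T - 1")
  case True
  have zq: "Z \<le> Q * L + L" using Q_maximal[OF True] by (simp add: algebra_simps)
  have g1: "G1 = T * S + 1 - L - S" and g2: "G2 = T * S + 1 - Z + Q * L - S"
    unfolding G1_def G2_def using assms zq by auto
  have "min 0 (T * S - Z + 1 + L * Q - S) = 0" using assms zq by (auto simp: algebra_simps)
  then have "count = ?Upsilon9" unfolding count_def g1 g2 by (simp add: algebra_simps)
  then show ?thesis unfolding agree_above_def by simp
next
  case False
  then have Q: "Q = T - 1" using Q_le by simp
  have G1: "0 \<le> G1" "G1 \<le> T * S + L - Z" and G2: "0 \<le> G2" "G2 \<le> T * S + L - Z"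
    unfolding G1_def G2_def using assms L_pos by auto
  have "(T - 2) * G1 \<le> (T - 2) * (T * S + L - Z)" using G1 T_ge_2 by (intro mult_left_mono) auto
  moreover have "count - Upsilon3 = (T - 2) * (T * S + L - Z) + (T * S + L - Z) - (T - 2) * G1 - G2"
    unfolding count_def Upsilon3_def by (simp add: Q algebra_simps)
  ultimately have "Upsilon3 \<le> count" using G2 by linarith
  define Y where "Y = T * S - Z + 1 + L * Q - S"
  define P where "P = (T - 1) * (L + S - 1 - Z)"
  have "0 \<le> P" unfolding P_def using T_ge_2 assms by simp
  have "L * 1 \<le> L * (T - 1)" using T_ge_2 L_pos by (intro mult_left_mono) auto
  moreover have "P + Z - L + Y = P + (T * S - S) + L * (T - 1) - L + 1"
    unfolding Y_def by (simp add: Q algebra_simps)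
  ultimately have "0 \<le> P + Z - L + min 0 Y" using \<open>0 \<le> P\<close> S_le_TS L_less_Z by (auto simp: min_def)
  moreover have "?Upsilon9 - Upsilon3 = P + Z - L + min 0 Y"
    unfolding Upsilon3_def P_def Y_def by (simp add: Q algebra_simps)
  ultimately show ?thesis using \<open>Upsilon3 \<le> count\<close> unfolding agree_above_def by linarith
qed

end

sublocale age_interior \<subseteq> interior_arith "int s" "int t" "int z" "int lam" "int q"
proof
  show "1 \<le> int s" "2 \<le> int t" "1 \<le> int lam" "int lam < int z" "1 \<le> int q" "int q \<le> int t - 1"
    using s_pos t_ge_2 lam_pos lam_less_z q_pos q_le by linarith+
  have "int (q * lam) \<le> int (z - 1)" using q_mult_le by (simp only: of_nat_le_iff)
  then show "int q * int lam \<le> int z - 1" using z_pos by (simp add: of_nat_diff)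
  assume "int q < int t - 1"
  then have "q < t - 1" by linarith
  then have "int z \<le> int ((q + 1) * lam)" using q_maximal by (simp only: of_nat_le_iff)
  then show "int z \<le> (int q + 1) * int lam" by (simp add: algebra_simps)
qed

context age_interior
begin

lemma int_N_age_eq_count: "int (N_age s t z lam) = count"
proof -
  have "int r + int q * int lam + 1 = int z" using arg_cong[OF r_eq, of int] by simp
  then have r: "int r = int z - 1 - int q * int lam" by linarith
  have g1: "int (t * s + 1 - max z (max (lam + s) (r + 1 + s))) = G1"
    and g2: "int (t * s + 1 - max z (r + 1 + s)) = G2"
    unfolding G1_def G2_def int_diff_eq_max of_nat_max using r by simp_all
  have "int (N_age s t z lam) + (int q - 1) * G1 + G2
      = 2 * (int t * int s) + int \<theta> * (int t - 1) + int \<theta> * int q + int r + int z"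
    using arg_cong[OF N_age_eq, of int] q_pos t_ge_2 unfolding g1[symmetric] g2[symmetric]
    by (simp add: of_nat_diff)
  then show ?thesis unfolding count_def r \<theta>_def by (simp add: algebra_simps)
qed

lemma agree_N_age_Gamma_interior:
  "agree_above (int (N_age s t z z)) (int (N_age s t z lam)) (Gamma s t z lam)"
proof -
  have "int (N_age s t z z) = Upsilon3"
    unfolding int_N_age_lam_eq_z Upsilon3_def by (simp add: algebra_simps)
  moreover have "agree_above Upsilon3 count (Gamma s t z lam)"
    unfolding Gamma_def Let_def using lam_pos lam_less_z
    by (auto intro: agree_Upsilon4 agree_Upsilon5 agree_Upsilon6 agree_Upsilon7 agree_Upsilon8 agree_Upsilon9)
  ultimately show ?thesis using int_N_age_eq_count by simp
qed

end

lemma agree_Upsilon1_Upsilon2: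
  fixes S T Z :: int
  assumes "1 \<le> S" "2 \<le> T" "1 \<le> Z"
  shows "agree_above (2 * (T * S) + (T * S + Z) * (T - 1) + 2 * Z - 1)
    (2 * (T * S) * T + 2 * Z - 1 - (T - 1) * max 0 (T * S + 1 - (S + Z)))
    (if Z > T * S - S then 2 * S * T^2 + 2 * Z - 1 else S * T^2 + 3 * S * T - 2 * S + T * (Z - 1) + 1)"
proof (cases "Z > T * S - S")
  case True
  then have "max 0 (T * S + 1 - (S + Z)) = 0" by simp
  then show ?thesis using True unfolding agree_above_def by (simp add: power2_eq_square algebra_simps)
next
  case False
  then have m: "max 0 (T * S + 1 - (S + Z)) = T * S + 1 - (S + Z)" by simp
  have "0 \<le> (T - 1) * (S - 1)" using assms by simp
  moreover have "(T - 1) * (S - 1) = T * S - S - T + 1" by (simp add: algebra_simps)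
  moreover have "2 * (T * S) * T + 2 * Z - 1 - (T - 1) * (T * S + 1 - (S + Z))
      = 2 * (T * S) + (T * S + Z) * (T - 1) + 2 * Z - 1 + (T - 1) * (S - 1)"
    by (simp add: algebra_simps)
  moreover have "S * T^2 + 3 * S * T - 2 * S + T * (Z - 1) + 1
      = 2 * (T * S) + (T * S + Z) * (T - 1) + 2 * Z - 1 + (2 * (T * S) - 2 * S - T + 2 - Z)"
    by (simp add: power2_eq_square algebra_simps)
  ultimately have "2 * (T * S) + (T * S + Z) * (T - 1) + 2 * Z - 1
        \<le> 2 * (T * S) * T + 2 * Z - 1 - (T - 1) * (T * S + 1 - (S + Z))"
      "2 * (T * S) + (T * S + Z) * (T - 1) + 2 * Z - 1 \<le> S * T^2 + 3 * S * T - 2 * S + T * (Z - 1) + 1"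
    using False by (simp_all only:)
  then show ?thesis using False unfolding agree_above_def m by simp
qed

lemma (in age_params) agree_N_age_Gamma:
  assumes "lam \<le> z"
  shows "agree_above (int (N_age s t z z)) (int (N_age s t z lam)) (Gamma s t z lam)"
proof -
  consider "lam = 0" | "lam = z" | "0 < lam" "lam < z" using assms by linarith
  then show ?thesis
  proof cases
    case 1
    then show ?thesis
      using agree_Upsilon1_Upsilon2[of "int s" "int t" "int z"] s_pos t_ge_2 z_pos
      unfolding 1 int_N_age_lam_eq_z int_N_age_lam_eq_0 by (simp add: Gamma_def Let_def algebra_simps)
  next
    case 2
    then show ?thesis unfolding 2 agree_above_def Gamma_lam_eq_z by simp
  next
    case 3
    then interpret age_interior s t z lam by unfold_locales
    show ?thesis by (rule agree_N_age_Gamma_interior)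
  qed
qed

theorem theorem5:
  fixes s t z :: nat
  assumes "s > 0" and "t > 0" and "z > 0"
  shows "(t = 1 \<longrightarrow> N_AGE_CMPC s t z = 2 * s + 2 * z - 1)
       \<and> (t \<ge> 2 \<longrightarrow> int (N_AGE_CMPC s t z) = Min ((\<lambda>lam. Gamma s t z lam) ` {0..z}))"
proof (intro conjI impI)
  assume "t = 1"
  then have "(\<lambda>lam. N_age s t z lam) ` {0..z} = {2 * s + 2 * z - 1}"
    using N_age_t_eq_1[OF assms(1,3)] by auto
  then show "N_AGE_CMPC s t z = 2 * s + 2 * z - 1" unfolding N_AGE_CMPC_def by simp
next
  assume "t \<ge> 2"
  then interpret age_params s t z using assms by unfold_locales
  have "int (N_AGE_CMPC s t z) = Min ((\<lambda>lam. int (N_age s t z lam)) ` {0..z})"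
    unfolding N_AGE_CMPC_def by (subst mono_Min_commute) (auto simp: mono_def image_image)
  also have "\<dots> = Min ((\<lambda>lam. Gamma s t z lam) ` {0..z})"
  proof (rule Min_image_eq_if_agree_above)
    show "int (N_age s t z z) = Gamma s t z z" by (rule Gamma_lam_eq_z[symmetric])
  qed (use agree_N_age_Gamma in auto)
  finally show "int (N_AGE_CMPC s t z) = Min ((\<lambda>lam. Gamma s t z lam) ` {0..z})" .
qed

end
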